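(* Let $Z=\{P_1,\dots,P_r\}\subset\mathbb{P}^2$ be a finite set of points and let $m>n$ be positive integers. Put $\beta=\alpha(I(mZ))$, $\gamma=\alpha(I(nZ))$ and $\alpha=\beta-\gamma$. Let $C$ be an effective divisor of degree $\beta$ with $\operatorname{ord}_{P_i}C\ge m$ for all $i$ (i.e. $C\in I(mZ)_\beta$), and suppose $C=C_1+C_2$ is a sum of two nonzero effective divisors. For $j=1,2$ let $\beta_j=\deg(C_j)$, $m_i^{(j)}=\operatorname{ord}_{P_i}C_j$, $\mathbf{m}^{(j)}=(m_1^{(j)},\dots,m_r^{(j)})$, $n_i^{(j)}=\max\{m_i^{(j)}-(m-n),0\}$ and $\mathbf{n}^{(j)}=(n_1^{(j)},\dots,n_r^{(j)})$. Then for $j=1,2$: (i) $\beta_j=\alpha(I(\mathbf{m}^{(j)}Z))$; (ii) $\alpha(I(\mathbf{m}^{(j)}Z))-\alpha(I(\mathbf{n}^{(j)}Z))\le\alpha$.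
   Context: Work over an algebraically closed field $\mathbb{K}$ of characteristic zero, $R=\mathbb{K}[x_0,x_1,x_2]$, $\mathbb{P}^2=\operatorname{Proj}R$. For a point $P$, $I(P)\subset R$ is its homogeneous maximal ideal. For $Z=\{P_1,\dots,P_r\}$ and a vector $\mathbf{m}=(m_1,\dots,m_r)$ of non-negative integers, $I(\mathbf{m}Z)=I(P_1)^{m_1}\cap\dots\cap I(P_r)^{m_r}$ (with $I(P)^0=R$); for an integer $m$, $I(mZ)=I(\mathbf{m}Z)$ with $\mathbf{m}=(m,\dots,m)$, which is the $m$-th symbolic power of $I(Z)$. For a homogeneous ideal $J=\bigoplus_n J_n$, the initial degree is $\alpha(J)=\min\{n: J_n\ne0\}$ (so $\alpha(R)=0$). A divisor "in $J_n$" means a plane curve (effective divisor) defined by a nonzero element of $J_n$; $\operatorname{ord}_P$ denotes the multiplicity of a divisor at $P$. *)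

theory Defs
  imports "HOL-Library.Poly_Mapping" "HOL-Library.Numeral_Type"
          "HOL-Computational_Algebra.Polynomial"
begin

text \<open>The polynomial ring R = K[x0,x1,x2]: exponent vectors are finitely supported
  maps from the 3-element type 3 to nat; polynomials are finitely supported maps
  from exponent vectors to coefficients (convolution product).\<close>

type_synonym mono3 = "3 \<Rightarrow>\<^sub>0 nat"
type_synonym 'k poly3 = "mono3 \<Rightarrow>\<^sub>0 'k"

definition mdeg :: "mono3 \<Rightarrow> nat" where
  "mdeg a = (\<Sum>i\<in>UNIV. Poly_Mapping.lookup a i)"

definition homogeneous :: "nat \<Rightarrow> 'k::zero poly3 \<Rightarrow> bool" where
  "homogeneous d f \<longleftrightarrow> (\<forall>a\<in>Poly_Mapping.keys f. mdeg a = d)"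

definition hcomp :: "nat \<Rightarrow> 'k::zero poly3 \<Rightarrow> 'k poly3" where
  "hcomp d f = Abs_poly_mapping (\<lambda>a. if mdeg a = d then Poly_Mapping.lookup f a else 0)"

definition eval3 :: "'k::comm_ring_1 poly3 \<Rightarrow> (3 \<Rightarrow> 'k) \<Rightarrow> 'k" where
  "eval3 f x = (\<Sum>a\<in>Poly_Mapping.keys f. Poly_Mapping.lookup f a * (\<Prod>i\<in>UNIV. x i ^ Poly_Mapping.lookup a i))"

text \<open>Homogeneous maximal ideal I(P) of a point P (given by a nonzero representative):
  polynomials all of whose homogeneous components vanish at P.\<close>
definition max_ideal :: "(3 \<Rightarrow> 'k::comm_ring_1) \<Rightarrow> 'k poly3 set" where
  "max_ideal P = {f. \<forall>d. eval3 (hcomp d f) P = 0}"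

text \<open>The power I(P)^m: the ideal generated by products of m elements of I(P)
  (I(P)^0 = R).\<close>
inductive_set ideal_pow :: "(3 \<Rightarrow> 'k::comm_ring_1) \<Rightarrow> nat \<Rightarrow> 'k poly3 set"
  for P :: "3 \<Rightarrow> 'k" and m :: nat where
  zero: "0 \<in> ideal_pow P m"
| add: "f \<in> ideal_pow P m \<Longrightarrow> g \<in> ideal_pow P m \<Longrightarrow> f + g \<in> ideal_pow P m"
| gen: "(\<forall>i<m. q i \<in> max_ideal P) \<Longrightarrow> h * (\<Prod>i<m. q i) \<in> ideal_pow P m"

definition fat_ideal :: "(3 \<Rightarrow> 'k::comm_ring_1) set \<Rightarrow> ((3 \<Rightarrow> 'k) \<Rightarrow> nat) \<Rightarrow> 'k poly3 set" where
  "fat_ideal Z mv = {f. \<forall>P\<in>Z. f \<in> ideal_pow P (mv P)}"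

definition init_deg :: "'k::zero poly3 set \<Rightarrow> nat" where
  "init_deg J = (LEAST d. \<exists>f\<in>J. f \<noteq> 0 \<and> homogeneous d f)"

definition ord_at :: "(3 \<Rightarrow> 'k::comm_ring_1) \<Rightarrow> 'k poly3 \<Rightarrow> nat" where
  "ord_at P f = (GREATEST k. f \<in> ideal_pow P k)"

definition alg_closed_field :: "'k::field itself \<Rightarrow> bool" where
  "alg_closed_field _ \<longleftrightarrow> (\<forall>p::'k poly. Polynomial.degree p \<ge> 1 \<longrightarrow> (\<exists>x. poly p x = 0))"

end

theory Submission
  imports Defs
begin

text \<open>
  The multiplicity of a form at a point is additive: after a linear change of coordinates
  moving P to a coordinate point and grading by the degree in the other two variables,
  \<open>ord_P F\<close> becomes the order at \<open>t = 0\<close> of a polynomial in \<open>t\<close> over an integral domain.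
  Hence \<open>ord_P C\<^sub>1 + ord_P C\<^sub>2 \<ge> m\<close> for every \<open>P \<in> Z\<close>. If \<open>D\<close> has minimal degree in
  \<open>I(m\<^sup>(\<^sup>1\<^sup>)Z)\<close>, then \<open>D C\<^sub>2 \<in> I(mZ)\<close>, so \<open>\<beta> \<le> \<alpha>(I(m\<^sup>(\<^sup>1\<^sup>)Z)) + \<beta>\<^sub>2\<close>, which forces
  \<open>\<beta>\<^sub>1 = \<alpha>(I(m\<^sup>(\<^sup>1\<^sup>)Z))\<close>. Likewise \<open>G C\<^sub>2 \<in> I(nZ)\<close> for \<open>G\<close> of minimal degree in
  \<open>I(n\<^sup>(\<^sup>1\<^sup>)Z)\<close>, because \<open>(ord_P C\<^sub>1 - (m - n)) + ord_P C\<^sub>2 \<ge> n\<close>; this gives (ii).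
\<close>

section \<open>Ring homomorphisms and evaluation of ternary polynomials\<close>

definition is_ring_hom :: "('a::comm_ring_1 \<Rightarrow> 'b::comm_ring_1) \<Rightarrow> bool" where
  "is_ring_hom \<phi> \<longleftrightarrow>
     \<phi> 1 = 1 \<and> (\<forall>a b. \<phi> (a + b) = \<phi> a + \<phi> b) \<and> (\<forall>a b. \<phi> (a * b) = \<phi> a * \<phi> b)"

lemma is_ring_hom_1: "is_ring_hom \<phi> \<Longrightarrow> \<phi> 1 = 1"
  and is_ring_hom_add: "is_ring_hom \<phi> \<Longrightarrow> \<phi> (a + b) = \<phi> a + \<phi> b"
  and is_ring_hom_mult: "is_ring_hom \<phi> \<Longrightarrow> \<phi> (a * b) = \<phi> a * \<phi> b"
  by (simp_all add: is_ring_hom_def)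

lemma is_ring_hom_0: "is_ring_hom \<phi> \<Longrightarrow> \<phi> 0 = 0"
  using is_ring_hom_add[of \<phi> 0 0] by simp

lemma is_ring_hom_diff: "is_ring_hom \<phi> \<Longrightarrow> \<phi> (a - b) = \<phi> a - \<phi> b"
  using is_ring_hom_add[of \<phi> "a - b" b] by (simp add: eq_diff_eq)

lemma is_ring_hom_sum: "is_ring_hom \<phi> \<Longrightarrow> \<phi> (sum f A) = (\<Sum>x\<in>A. \<phi> (f x))"
  by (induction A rule: infinite_finite_induct) (auto simp: is_ring_hom_0 is_ring_hom_add)

lemma is_ring_hom_prod: "is_ring_hom \<phi> \<Longrightarrow> \<phi> (prod f A) = (\<Prod>x\<in>A. \<phi> (f x))"
  by (induction A rule: infinite_finite_induct) (auto simp: is_ring_hom_1 is_ring_hom_mult)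

lemma is_ring_hom_power: "is_ring_hom \<phi> \<Longrightarrow> \<phi> (a ^ n) = \<phi> a ^ n"
  by (induction n) (auto simp: is_ring_hom_1 is_ring_hom_mult)

lemma is_ring_hom_comp: "is_ring_hom \<phi> \<Longrightarrow> is_ring_hom \<psi> \<Longrightarrow> is_ring_hom (\<lambda>x. \<psi> (\<phi> x))"
  by (simp add: is_ring_hom_def)

lemma is_ring_hom_id: "is_ring_hom (\<lambda>x. x)"
  by (simp add: is_ring_hom_def)

lemma is_ring_hom_coeff_0: "is_ring_hom (\<lambda>p. coeff p 0)"
  by (simp add: is_ring_hom_def coeff_mult_0)

definition eval_monom :: "(3 \<Rightarrow> 'b::comm_ring_1) \<Rightarrow> mono3 \<Rightarrow> 'b" where
  "eval_monom x a = (\<Prod>i\<in>UNIV. x i ^ Poly_Mapping.lookup a i)"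

definition eval_map :: "('a::comm_ring_1 \<Rightarrow> 'b::comm_ring_1) \<Rightarrow> 'a poly3 \<Rightarrow> (3 \<Rightarrow> 'b) \<Rightarrow> 'b" where
  "eval_map h f x = (\<Sum>a\<in>Poly_Mapping.keys f. h (Poly_Mapping.lookup f a) * eval_monom x a)"

lemma eval3_eq_eval_map: "eval3 f x = eval_map (\<lambda>c. c) f x"
  by (simp add: eval3_def eval_map_def eval_monom_def)

lemma eval_monom_0: "eval_monom x 0 = 1"
  by (simp add: eval_monom_def)

lemma eval_monom_add: "eval_monom x (a + b) = eval_monom x a * eval_monom x b"
  by (simp add: eval_monom_def lookup_add power_add prod.distrib)

lemma eval_monom_single_1: "eval_monom x (Poly_Mapping.single i 1) = x i"
proof -
  have "eval_monom x (Poly_Mapping.single i 1) = (\<Prod>k\<in>UNIV. if k = i then x i else 1)"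
    unfolding eval_monom_def by (rule prod.cong) (auto simp: lookup_single when_def)
  then show ?thesis by (simp add: prod.delta)
qed

lemma poly_mapping_sum_single_lookup:
  "f = (\<Sum>a\<in>Poly_Mapping.keys f. Poly_Mapping.single a (Poly_Mapping.lookup f a))"
  by (rule poly_mapping_eqI) (simp add: lookup_sum lookup_single when_def in_keys_iff)

lemma eval_map_superset:
  assumes "is_ring_hom h" "finite S" "Poly_Mapping.keys f \<subseteq> S"
  shows "eval_map h f x = (\<Sum>a\<in>S. h (Poly_Mapping.lookup f a) * eval_monom x a)"
  unfolding eval_map_def
  by (rule sum.mono_neutral_left) (use assms in \<open>auto simp: is_ring_hom_0 in_keys_iff\<close>)

lemma eval_map_0: "eval_map h 0 x = 0"
  by (simp add: eval_map_def)

lemma eval_map_single: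
  "is_ring_hom h \<Longrightarrow> eval_map h (Poly_Mapping.single a c) x = h c * eval_monom x a"
  by (simp add: eval_map_def is_ring_hom_0)

lemma eval_map_add:
  assumes "is_ring_hom h"
  shows "eval_map h (f + g) x = eval_map h f x + eval_map h g x"
proof -
  let ?S = "Poly_Mapping.keys f \<union> Poly_Mapping.keys g"
  have "eval_map h (f + g) x = (\<Sum>a\<in>?S. h (Poly_Mapping.lookup (f + g) a) * eval_monom x a)"
    by (rule eval_map_superset) (use assms keys_add[of f g] in auto)
  also have "\<dots> = (\<Sum>a\<in>?S. h (Poly_Mapping.lookup f a) * eval_monom x a)
                 + (\<Sum>a\<in>?S. h (Poly_Mapping.lookup g a) * eval_monom x a)"
    by (simp add: lookup_add is_ring_hom_add[OF assms] distrib_right sum.distrib)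
  also have "\<dots> = eval_map h f x + eval_map h g x"
    using eval_map_superset[OF assms, of ?S] by auto
  finally show ?thesis .
qed

lemma eval_map_sum:
  "is_ring_hom h \<Longrightarrow> eval_map h (sum f A) x = (\<Sum>i\<in>A. eval_map h (f i) x)"
  by (induction A rule: infinite_finite_induct) (auto simp: eval_map_0 eval_map_add)

lemma eval_map_mult:
  assumes h: "is_ring_hom h"
  shows "eval_map h (f * g) x = eval_map h f x * eval_map h g x"
proof -
  let ?sf = "\<lambda>a. Poly_Mapping.single a (Poly_Mapping.lookup f a)"
  let ?sg = "\<lambda>b. Poly_Mapping.single b (Poly_Mapping.lookup g b)"
  have "f * g = (\<Sum>a\<in>Poly_Mapping.keys f. \<Sum>b\<in>Poly_Mapping.keys g. ?sf a * ?sg b)"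
    by (subst poly_mapping_sum_single_lookup[of f], subst poly_mapping_sum_single_lookup[of g])
      (simp add: sum_product)
  then have "eval_map h (f * g) x =
      (\<Sum>a\<in>Poly_Mapping.keys f. \<Sum>b\<in>Poly_Mapping.keys g. eval_map h (?sf a * ?sg b) x)"
    by (simp add: eval_map_sum[OF h])
  also have "\<dots> = (\<Sum>a\<in>Poly_Mapping.keys f. \<Sum>b\<in>Poly_Mapping.keys g.
      (h (Poly_Mapping.lookup f a) * eval_monom x a) * (h (Poly_Mapping.lookup g b) * eval_monom x b))"
    by (simp add: mult_single eval_map_single[OF h] is_ring_hom_mult[OF h] eval_monom_add mult_ac)
  also have "\<dots> = eval_map h f x * eval_map h g x"
    by (simp add: eval_map_def sum_product)
  finally show ?thesis .
qed

lemma eval_map_1: "is_ring_hom h \<Longrightarrow> eval_map h 1 x = 1"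
  using eval_map_single[of h 0 1 x] by (simp add: is_ring_hom_1 eval_monom_0)

lemma is_ring_hom_eval_map: "is_ring_hom h \<Longrightarrow> is_ring_hom (\<lambda>f. eval_map h f x)"
  by (simp add: is_ring_hom_def eval_map_1 eval_map_add eval_map_mult)

lemma eval_map_diff: "is_ring_hom h \<Longrightarrow> eval_map h (f - g) x = eval_map h f x - eval_map h g x"
  using is_ring_hom_diff[OF is_ring_hom_eval_map[of h x]] by simp

lemma hom_eval_map:
  assumes "is_ring_hom \<phi>"
  shows "\<phi> (eval_map h f x) = eval_map (\<lambda>c. \<phi> (h c)) f (\<lambda>i. \<phi> (x i))"
  by (simp add: eval_map_def eval_monom_def is_ring_hom_sum[OF assms] is_ring_hom_mult[OF assms]
      is_ring_hom_prod[OF assms] is_ring_hom_power[OF assms])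

definition var3 :: "3 \<Rightarrow> 'a::comm_ring_1 poly3" where
  "var3 i = Poly_Mapping.single (Poly_Mapping.single i 1) 1"

definition const3 :: "'a::comm_ring_1 \<Rightarrow> 'a poly3" where
  "const3 c = Poly_Mapping.single 0 c"

lemma is_ring_hom_const3: "is_ring_hom const3"
  by (simp add: is_ring_hom_def const3_def single_add mult_single)

lemma eval_map_const3: "is_ring_hom h \<Longrightarrow> eval_map h (const3 c) x = h c"
  by (simp add: const3_def eval_map_single eval_monom_0)

lemma eval_map_var3: "is_ring_hom h \<Longrightarrow> eval_map h (var3 i) x = x i"
  using eval_monom_single_1[of x i] by (simp add: var3_def eval_map_single is_ring_hom_1)

lemma eval_monom_var3: "eval_monom var3 a = Poly_Mapping.single a 1"
proof -
  have var3_power: "var3 i ^ n = Poly_Mapping.single (Poly_Mapping.single i n) 1" for i n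
    by (induction n) (simp_all add: var3_def mult_single flip: single_add)
  have "(\<Prod>i\<in>A. Poly_Mapping.single (g i) (1::'a)) = Poly_Mapping.single (\<Sum>i\<in>A. g i) 1"
    for A and g :: "3 \<Rightarrow> mono3"
    by (induction A rule: infinite_finite_induct) (simp_all add: mult_single)
  moreover have "(\<Sum>i\<in>UNIV. Poly_Mapping.single i (Poly_Mapping.lookup a i)) = a"
    by (rule poly_mapping_eqI) (simp add: lookup_sum lookup_single when_def)
  ultimately show ?thesis
    by (simp add: eval_monom_def var3_power)
qed

lemma eval_map_const3_var3: "eval_map const3 f var3 = f"
  unfolding eval_map_def eval_monom_var3 const3_def
  by (simp add: mult_single flip: poly_mapping_sum_single_lookup)

section \<open>Powers of the ideal of a point\<close>

lemma ideal_pow_0: "f \<in> ideal_pow P 0"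
  using ideal_pow.gen[of 0 "\<lambda>_. 0" P f] by simp

lemma ideal_pow_Suc_subset: "f \<in> ideal_pow P (Suc k) \<Longrightarrow> f \<in> ideal_pow P k"
proof (induction rule: ideal_pow.induct)
  case zero
  then show ?case by (rule ideal_pow.zero)
next
  case (add f g)
  then show ?case by (blast intro: ideal_pow.add)
next
  case (gen q h)
  have "(h * q k) * (\<Prod>i<k. q i) \<in> ideal_pow P k"
    by (rule ideal_pow.gen) (use gen in auto)
  then show ?case by (simp add: mult_ac)
qed

lemma ideal_pow_antimono: "l \<le> k \<Longrightarrow> f \<in> ideal_pow P k \<Longrightarrow> f \<in> ideal_pow P l"
  by (induction k rule: dec_induct) (auto intro: ideal_pow_Suc_subset)

lemma ideal_pow_mult:
  assumes "f \<in> ideal_pow P a" "g \<in> ideal_pow P b"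
  shows "f * g \<in> ideal_pow P (a + b)"
  using assms(1)
proof (induction rule: ideal_pow.induct)
  case zero
  then show ?case by (simp add: ideal_pow.zero)
next
  case (add f1 f2)
  then show ?case by (simp add: distrib_right ideal_pow.add)
next
  case (gen q h)
  from assms(2) show ?case
  proof (induction rule: ideal_pow.induct)
    case zero
    then show ?case by (simp add: ideal_pow.zero)
  next
    case (add g1 g2)
    then show ?case by (simp add: distrib_left ideal_pow.add)
  next
    case (gen q' h')
    define r where "r i = (if i < a then q i else q' (i - a))" for i
    have "(h * h') * (\<Prod>i<a + b. r i) \<in> ideal_pow P (a + b)"
      by (rule ideal_pow.gen) (use gen \<open>\<forall>i<a. q i \<in> max_ideal P\<close> in \<open>auto simp: r_def\<close>)
    moreover have "(\<Prod>i<a + b. r i) = (\<Prod>i<a. q i) * (\<Prod>i<b. q' i)"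
      by (induction b) (simp_all add: r_def mult_ac)
    ultimately show ?case by (simp add: mult_ac)
  qed
qed

lemma ideal_pow_mult_left: "g \<in> ideal_pow P k \<Longrightarrow> f * g \<in> ideal_pow P k"
  using ideal_pow_mult[OF ideal_pow_0, of g P k f] by simp

lemma ideal_pow_sum:
  "(\<And>i. i \<in> A \<Longrightarrow> f i \<in> ideal_pow P k) \<Longrightarrow> sum f A \<in> ideal_pow P k"
  by (induction A rule: infinite_finite_induct) (auto intro: ideal_pow.zero ideal_pow.add)

lemma ideal_pow_prod:
  "(\<And>i. i \<in> A \<Longrightarrow> f i \<in> ideal_pow P (k i)) \<Longrightarrow> prod f A \<in> ideal_pow P (sum k A)"
  by (induction A rule: infinite_finite_induct) (simp_all add: ideal_pow_0 ideal_pow_mult)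

lemma power_in_ideal_pow: "q \<in> max_ideal P \<Longrightarrow> q ^ k \<in> ideal_pow P k"
  using ideal_pow.gen[of k "\<lambda>_. q" P 1] by simp

section \<open>Degrees and multiplicities\<close>

lemma mdeg_add: "mdeg (a + b) = mdeg a + mdeg b"
  by (simp add: mdeg_def lookup_add sum.distrib)

lemma mdeg_eq_0_iff: "mdeg a = 0 \<longleftrightarrow> a = 0"
  by (auto simp: mdeg_def intro: poly_mapping_eqI)

lemma mdeg_single: "mdeg (Poly_Mapping.single i n) = n"
proof -
  have "mdeg (Poly_Mapping.single i n) = (\<Sum>k\<in>UNIV. if i = k then n else 0)"
    unfolding mdeg_def by (rule sum.cong) (auto simp: lookup_single when_def)
  then show ?thesis by simp
qed

lemma homogeneous_mult:
  "homogeneous d f \<Longrightarrow> homogeneous e g \<Longrightarrow> homogeneous (d + e) (f * g)"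
  using keys_mult[of f g] unfolding homogeneous_def by (auto simp: mdeg_add)

lemma lookup_hcomp:
  "Poly_Mapping.lookup (hcomp d f) a = (if mdeg a = d then Poly_Mapping.lookup f a else 0)"
proof -
  have "finite {b. (if mdeg b = d then Poly_Mapping.lookup f b else 0) \<noteq> 0}"
    by (rule finite_subset[of _ "Poly_Mapping.keys f"]) (auto simp: in_keys_iff)
  then show ?thesis unfolding hcomp_def by (simp only: lookup_Abs_poly_mapping)
qed

lemma hcomp_homogeneous: "homogeneous e f \<Longrightarrow> hcomp d f = (if d = e then f else 0)"
  by (rule poly_mapping_eqI) (auto simp: lookup_hcomp homogeneous_def in_keys_iff)

lemma eval3_hcomp:
  "eval3 (hcomp d f) x =
     (\<Sum>a\<in>{a\<in>Poly_Mapping.keys f. mdeg a = d}. Poly_Mapping.lookup f a * eval_monom x a)"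
proof -
  have "Poly_Mapping.keys (hcomp d f) = {a\<in>Poly_Mapping.keys f. mdeg a = d}"
    by (rule set_eqI) (simp add: in_keys_iff lookup_hcomp)
  then show ?thesis
    unfolding eval3_eq_eval_map eval_map_def by (intro sum.cong) (simp_all add: lookup_hcomp)
qed

lemma max_ideal_keys_mdeg:
  assumes "q \<in> max_ideal P" "a \<in> Poly_Mapping.keys q"
  shows "1 \<le> mdeg a"
proof (rule ccontr)
  assume "\<not> 1 \<le> mdeg a"
  then have a: "a = 0" using mdeg_eq_0_iff[of a] by linarith
  have "{b\<in>Poly_Mapping.keys q. mdeg b = 0} = {0}"
    using assms(2) by (auto simp: a mdeg_eq_0_iff)
  moreover have "eval3 (hcomp 0 q) P = 0"
    using assms(1) by (simp add: max_ideal_def)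
  ultimately show False
    using assms(2) by (simp add: eval3_hcomp eval_monom_0 a in_keys_iff)
qed

lemma max_ideal_prod_keys_mdeg:
  "(\<And>i. i < k \<Longrightarrow> q i \<in> max_ideal P) \<Longrightarrow> a \<in> Poly_Mapping.keys (\<Prod>i<k. q i) \<Longrightarrow> k \<le> mdeg a"
proof (induction k arbitrary: a)
  case 0
  then show ?case by simp
next
  case (Suc k)
  from Suc.prems(2) keys_mult[of "\<Prod>i<k. q i" "q k"] obtain b c where
    "a = b + c" "b \<in> Poly_Mapping.keys (\<Prod>i<k. q i)" "c \<in> Poly_Mapping.keys (q k)" by auto
  with Suc.IH[of b] Suc.prems(1) max_ideal_keys_mdeg[of "q k" P c] show ?case
    by (auto simp: mdeg_add)
qed

lemma ideal_pow_keys_mdeg: "f \<in> ideal_pow P k \<Longrightarrow> a \<in> Poly_Mapping.keys f \<Longrightarrow> k \<le> mdeg a"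
proof (induction arbitrary: a rule: ideal_pow.induct)
  case zero
  then show ?case by simp
next
  case (add f g)
  then show ?case using keys_add[of f g] by auto
next
  case (gen q h)
  from gen.prems keys_mult[of h "\<Prod>i<k. q i"] obtain b c where
    "a = b + c" "c \<in> Poly_Mapping.keys (\<Prod>i<k. q i)" by auto
  with max_ideal_prod_keys_mdeg[of k q P c] gen.hyps show ?case by (auto simp: mdeg_add)
qed

lemma ideal_pow_le_degree:
  assumes "f \<in> ideal_pow P k" "f \<noteq> 0" "homogeneous d f"
  shows "k \<le> d"
proof -
  obtain a where "a \<in> Poly_Mapping.keys f"
    using assms(2) by (metis all_not_in_conv keys_eq_empty)
  with assms ideal_pow_keys_mdeg[of f P k a] show ?thesis by (auto simp: homogeneous_def)
qed

lemma
  assumes "f \<noteq> 0" "homogeneous d f"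
  shows in_ideal_pow_ord_at: "f \<in> ideal_pow P (ord_at P f)"
    and le_ord_at: "f \<in> ideal_pow P k \<Longrightarrow> k \<le> ord_at P f"
proof -
  show "f \<in> ideal_pow P (ord_at P f)" unfolding ord_at_def
    by (rule GreatestI_nat[of _ 0 d]) (use assms ideal_pow_le_degree ideal_pow_0 in auto)
  show "f \<in> ideal_pow P k \<Longrightarrow> k \<le> ord_at P f" unfolding ord_at_def
    by (rule Greatest_le_nat[of _ _ d]) (use assms ideal_pow_le_degree in auto)
qed

section \<open>Additivity of the multiplicity\<close>

text \<open>
  For \<open>P j \<noteq> 0\<close>, substituting \<open>shear P j\<close> for the variables moves P to the coordinate
  point \<open>e\<^sub>j\<close>; \<open>unshear P j\<close> undoes it, and its non-\<open>j\<close> entries are linear forms in \<open>I(P)\<close>.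
\<close>
definition shear :: "(3 \<Rightarrow> 'k::field) \<Rightarrow> 3 \<Rightarrow> 3 \<Rightarrow> 'k poly3" where
  "shear P j i = (if i = j then var3 i else var3 i + const3 (P i / P j) * var3 j)"

definition unshear :: "(3 \<Rightarrow> 'k::field) \<Rightarrow> 3 \<Rightarrow> 3 \<Rightarrow> 'k poly3" where
  "unshear P j i = (if i = j then var3 i else var3 i - const3 (P i / P j) * var3 j)"

lemma eval_map_shear_unshear: "eval_map const3 (eval_map const3 f (shear P j)) (unshear P j) = f"
proof -
  have h: "is_ring_hom (\<lambda>g. eval_map const3 g (unshear P j))"
    by (rule is_ring_hom_eval_map[OF is_ring_hom_const3])
  have "(\<lambda>i. eval_map const3 (shear P j i) (unshear P j)) = var3"
    by (auto simp: fun_eq_iff shear_def unshear_def eval_map_add eval_map_mult eval_map_const3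
        eval_map_var3 is_ring_hom_const3)
  then show ?thesis
    by (simp add: hom_eval_map[OF h] eval_map_const3 is_ring_hom_const3 eval_map_const3_var3)
qed

lemma unshear_in_max_ideal:
  assumes "P j \<noteq> 0" "i \<noteq> j"
  shows "unshear P j i \<in> max_ideal P"
proof -
  let ?c = "P i / P j"
  have eq: "unshear P j i = Poly_Mapping.single (Poly_Mapping.single i 1) 1
                          + Poly_Mapping.single (Poly_Mapping.single j 1) (- ?c)"
    using assms by (simp add: unshear_def var3_def const3_def mult_single single_uminus)
  have "homogeneous 1 (unshear P j i)"
    unfolding homogeneous_def
  proof
    fix a assume "a \<in> Poly_Mapping.keys (unshear P j i)"
    then have "a \<in> Poly_Mapping.keys (Poly_Mapping.single (Poly_Mapping.single i 1) (1::'a))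
                 \<union> Poly_Mapping.keys (Poly_Mapping.single (Poly_Mapping.single j 1) (- ?c))"
      unfolding eq using keys_add[of "Poly_Mapping.single (Poly_Mapping.single i 1) (1::'a)"
          "Poly_Mapping.single (Poly_Mapping.single j 1) (- ?c)"] by blast
    then have "a = Poly_Mapping.single i 1 \<or> a = Poly_Mapping.single j 1"
      by (cases "?c = 0") auto
    then show "mdeg a = 1" by (auto simp: mdeg_single)
  qed
  moreover have "eval3 (unshear P j i) P = 0"
    using assms by (simp add: eval3_eq_eval_map unshear_def eval_map_diff eval_map_mult
        is_ring_hom_id eval_map_var3 eval_map_const3)
  ultimately show ?thesis
    by (auto simp: max_ideal_def hcomp_homogeneous eval3_eq_eval_map eval_map_0)
qed

definition codeg :: "3 \<Rightarrow> mono3 \<Rightarrow> nat" where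
  "codeg j a = (\<Sum>i\<in>UNIV. if i = j then 0 else Poly_Mapping.lookup a i)"

lemma unshear_eval_map_in_ideal_pow:
  assumes "P j \<noteq> 0" "\<forall>a\<in>Poly_Mapping.keys g. k \<le> codeg j a"
  shows "eval_map const3 g (unshear P j) \<in> ideal_pow P k"
  unfolding eval_map_def
proof (rule ideal_pow_sum)
  fix a assume a: "a \<in> Poly_Mapping.keys g"
  have "unshear P j i \<in> max_ideal P" if "i \<noteq> j" for i
    using unshear_in_max_ideal assms(1) that by blast
  then have "eval_monom (unshear P j) a \<in> ideal_pow P (codeg j a)"
    unfolding eval_monom_def codeg_def
    by (intro ideal_pow_prod) (auto simp: ideal_pow_0 intro: power_in_ideal_pow)
  then show "const3 (Poly_Mapping.lookup g a) * eval_monom (unshear P j) a \<in> ideal_pow P k"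
    using assms(2) a by (auto intro: ideal_pow_mult_left ideal_pow_antimono)
qed

text \<open>\<open>codeg_poly j g\<close> is \<open>g\<close> with \<open>x\<^sub>i\<close> replaced by \<open>t x\<^sub>i\<close> for \<open>i \<noteq> j\<close>, a polynomial in \<open>t\<close>.\<close>
definition codeg_poly :: "3 \<Rightarrow> 'a::comm_ring_1 poly3 \<Rightarrow> 'a poly3 poly" where
  "codeg_poly j g = eval_map (\<lambda>c. [:const3 c:]) g (\<lambda>i. monom (var3 i) (if i = j then 0 else 1))"

lemma is_ring_hom_pCons_const3: "is_ring_hom (\<lambda>c. [:const3 c:])"
  using is_ring_hom_const3 by (simp add: is_ring_hom_def one_pCons mult.commute)

lemma is_ring_hom_codeg_poly: "is_ring_hom (codeg_poly j)"
  unfolding codeg_poly_def[abs_def] by (rule is_ring_hom_eval_map[OF is_ring_hom_pCons_const3])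

lemma prod_monom: "(\<Prod>i\<in>A. monom (f i) (e i)) = monom (\<Prod>i\<in>A. f i) (\<Sum>i\<in>A. e i)"
  by (induction A rule: infinite_finite_induct) (simp_all add: mult_monom)

lemma coeff_codeg_poly:
  "Poly_Mapping.lookup (coeff (codeg_poly j g) l) b =
     (if codeg j b = l then Poly_Mapping.lookup g b else 0)"
proof -
  have "eval_monom (\<lambda>i. monom (var3 i) (if i = j then 0 else 1)) a
          = monom (Poly_Mapping.single a (1::'a)) (codeg j a)" for a :: mono3
  proof -
    have "eval_monom (\<lambda>i. monom (var3 i) (if i = j then 0 else 1)) a = (\<Prod>i\<in>UNIV.
        monom (var3 i ^ Poly_Mapping.lookup a i) ((if i = j then 0 else 1) * Poly_Mapping.lookup a i))"
      unfolding eval_monom_def by (simp add: monom_power)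
    also have "\<dots> = monom (eval_monom var3 a) (codeg j a)"
      unfolding prod_monom eval_monom_def codeg_def
      by (intro arg_cong2[where f=monom] refl sum.cong) auto
    finally show ?thesis by (simp add: eval_monom_var3)
  qed
  then have expand: "codeg_poly j g = (\<Sum>a\<in>Poly_Mapping.keys g.
      monom (Poly_Mapping.single a (Poly_Mapping.lookup g a)) (codeg j a))"
    unfolding codeg_poly_def eval_map_def
    by (intro sum.cong) (simp_all add: smult_monom const3_def mult_single)
  have "Poly_Mapping.lookup (coeff (codeg_poly j g) l) b = (\<Sum>a\<in>Poly_Mapping.keys g.
      if a = b then (if codeg j a = l then Poly_Mapping.lookup g a else 0) else 0)"
    unfolding expand coeff_sum lookup_sum
    by (rule sum.cong) (auto simp: coeff_monom lookup_single when_def)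
  then show ?thesis
    by (simp add: sum.delta in_keys_iff)
qed

lemma codeg_poly_eq_0_iff: "codeg_poly j g = 0 \<longleftrightarrow> g = 0"
proof
  assume "codeg_poly j g = 0"
  then have "Poly_Mapping.lookup g a = 0" for a
    using coeff_codeg_poly[of j g "codeg j a" a] by simp
  then show "g = 0" by (intro poly_mapping_eqI) simp
qed (simp add: is_ring_hom_0[OF is_ring_hom_codeg_poly])

lemma codeg_poly_dvd_keys:
  assumes "[:0, 1:] ^ k dvd codeg_poly j g" "a \<in> Poly_Mapping.keys g"
  shows "k \<le> codeg j a"
proof (rule ccontr)
  assume "\<not> k \<le> codeg j a"
  with assms(1) have "coeff (codeg_poly j g) (codeg j a) = 0"
    by (auto elim!: dvdE simp: monom_altdef[of 1 k, simplified, symmetric] coeff_monom_mult)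
  then show False
    using coeff_codeg_poly[of j g "codeg j a" a] assms(2) by (simp add: in_keys_iff)
qed

text \<open>\<open>f\<close> in coordinates centred at \<open>P\<close>, graded by the degree in the two local coordinates.\<close>
definition local_poly :: "(3 \<Rightarrow> 'k::field) \<Rightarrow> 3 \<Rightarrow> 'k poly3 \<Rightarrow> 'k poly3 poly" where
  "local_poly P j f = codeg_poly j (eval_map const3 f (shear P j))"

lemma is_ring_hom_local_poly: "is_ring_hom (local_poly P j)"
  unfolding local_poly_def[abs_def]
  by (rule is_ring_hom_comp[OF is_ring_hom_eval_map[OF is_ring_hom_const3] is_ring_hom_codeg_poly])

lemma local_poly_eq_0_iff: "local_poly P j f = 0 \<longleftrightarrow> f = 0"
  using eval_map_shear_unshear[of f P j]
  by (auto simp: local_poly_def codeg_poly_eq_0_iff eval_map_0)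

lemma max_ideal_vanishes_on_line:
  assumes "q \<in> max_ideal P"
  shows "eval_map const3 q (\<lambda>i. const3 (c * P i) * Y) = 0"
proof -
  let ?K = "Poly_Mapping.keys q"
  have eval_monom_line:
    "eval_monom (\<lambda>i. const3 (c * P i) * Y) a = const3 (c ^ mdeg a * eval_monom P a) * Y ^ mdeg a"
    for a
    by (simp add: eval_monom_def mdeg_def power_mult_distrib prod.distrib power_sum
        is_ring_hom_prod[OF is_ring_hom_const3] is_ring_hom_power[OF is_ring_hom_const3]
        is_ring_hom_mult[OF is_ring_hom_const3])
  have "eval_map const3 q (\<lambda>i. const3 (c * P i) * Y)
      = (\<Sum>a\<in>?K. const3 (c ^ mdeg a * (Poly_Mapping.lookup q a * eval_monom P a)) * Y ^ mdeg a)"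
    unfolding eval_map_def eval_monom_line by (simp add: is_ring_hom_mult[OF is_ring_hom_const3] mult_ac)
  also have "\<dots> = (\<Sum>d\<in>mdeg ` ?K. \<Sum>a\<in>{a\<in>?K. mdeg a = d}.
      const3 (c ^ mdeg a * (Poly_Mapping.lookup q a * eval_monom P a)) * Y ^ mdeg a)"
    by (rule sum.image_gen) simp
  also have "\<dots> = (\<Sum>d\<in>mdeg ` ?K. \<Sum>a\<in>{a\<in>?K. mdeg a = d}.
      const3 (c ^ d * (Poly_Mapping.lookup q a * eval_monom P a)) * Y ^ d)"
    by (intro sum.cong refl) auto
  also have "\<dots> = (\<Sum>d\<in>mdeg ` ?K. const3 (c ^ d * eval3 (hcomp d q) P) * Y ^ d)"
    by (simp add: eval3_hcomp sum_distrib_left sum_distrib_right is_ring_hom_sum[OF is_ring_hom_const3])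
  also have "\<dots> = 0"
    using assms by (simp add: max_ideal_def is_ring_hom_0[OF is_ring_hom_const3])
  finally show ?thesis .
qed

lemma local_poly_max_ideal:
  assumes q: "q \<in> max_ideal P" and Pj: "P j \<noteq> 0"
  shows "[:0, 1:] dvd local_poly P j q"
proof -
  have h: "is_ring_hom (\<lambda>f. coeff (codeg_poly j f) 0)"
    by (rule is_ring_hom_comp[OF is_ring_hom_codeg_poly is_ring_hom_coeff_0])
  have const: "(\<lambda>c. coeff (codeg_poly j (const3 c)) 0) = const3"
    by (simp add: fun_eq_iff codeg_poly_def eval_map_const3 is_ring_hom_pCons_const3)
  have shear: "(\<lambda>i. coeff (codeg_poly j (shear P j i)) 0)
                = (\<lambda>i. const3 (inverse (P j) * P i) * var3 j)"
  proof
    fix i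
    show "coeff (codeg_poly j (shear P j i)) 0 = const3 (inverse (P j) * P i) * var3 j"
      using Pj by (cases "i = j") (simp_all add: shear_def codeg_poly_def eval_map_add
          eval_map_mult eval_map_const3 eval_map_var3 is_ring_hom_pCons_const3 coeff_mult_0
          coeff_monom divide_inverse_commute is_ring_hom_1[OF is_ring_hom_const3]
          flip: is_ring_hom_mult[OF is_ring_hom_const3])
  qed
  have "coeff (local_poly P j q) 0 = 0"
    unfolding local_poly_def hom_eval_map[OF h] const shear
    by (rule max_ideal_vanishes_on_line[OF q])
  then show ?thesis
    by (simp add: dvd_iff_poly_eq_0[of 0, simplified] poly_0_coeff_0)
qed

lemma local_poly_ideal_pow:
  assumes "f \<in> ideal_pow P k" and Pj: "P j \<noteq> 0"
  shows "[:0, 1:] ^ k dvd local_poly P j f"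
  using assms(1)
proof (induction rule: ideal_pow.induct)
  case zero
  then show ?case by (simp add: is_ring_hom_0[OF is_ring_hom_local_poly])
next
  case (add f g)
  then show ?case by (simp add: is_ring_hom_add[OF is_ring_hom_local_poly])
next
  case (gen q h)
  have "(\<Prod>i<k. [:0, 1:]) dvd (\<Prod>i<k. local_poly P j (q i))"
    by (rule prod_dvd_prod) (use gen local_poly_max_ideal Pj in auto)
  then show ?case
    by (simp add: is_ring_hom_mult[OF is_ring_hom_local_poly] is_ring_hom_prod[OF is_ring_hom_local_poly])
qed

lemma order_local_poly:
  assumes "f \<noteq> 0" "homogeneous d f" "P j \<noteq> 0"
  shows "order 0 (local_poly P j f) = ord_at P f"
proof (rule antisym)
  let ?k = "order 0 (local_poly P j f)"
  have "[:0, 1:] ^ ?k dvd codeg_poly j (eval_map const3 f (shear P j))"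
    using order_1[of 0 "local_poly P j f"] by (simp add: local_poly_def)
  then have "eval_map const3 (eval_map const3 f (shear P j)) (unshear P j) \<in> ideal_pow P ?k"
    by (intro unshear_eval_map_in_ideal_pow assms(3)) (blast intro: codeg_poly_dvd_keys)
  then show "?k \<le> ord_at P f"
    by (intro le_ord_at[OF assms(1,2)]) (simp add: eval_map_shear_unshear)
  have "[:0, 1:] ^ ord_at P f dvd local_poly P j f"
    by (rule local_poly_ideal_pow[OF in_ideal_pow_ord_at[OF assms(1,2), of P] assms(3)])
  then show "ord_at P f \<le> ?k"
    using order_divides[of 0 "ord_at P f" "local_poly P j f"] assms(1)
    by (simp add: local_poly_eq_0_iff)
qed

lemma ord_at_mult:
  fixes P :: "3 \<Rightarrow> 'k::field"
  assumes "P \<noteq> (\<lambda>_. 0)" "f \<noteq> 0" "homogeneous d f" "g \<noteq> 0" "homogeneous e g"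
  shows "ord_at P (f * g) = ord_at P f + ord_at P g"
proof -
  from assms(1) obtain j where Pj: "P j \<noteq> 0" by auto
  have "ord_at P (f * g) = order 0 (local_poly P j f * local_poly P j g)"
    using order_local_poly[of "f * g" "d + e" P j] assms Pj
    by (simp add: homogeneous_mult is_ring_hom_mult[OF is_ring_hom_local_poly])
  also have "\<dots> = ord_at P f + ord_at P g"
    using assms Pj by (simp add: order_mult local_poly_eq_0_iff order_local_poly)
  finally show ?thesis .
qed

section \<open>Initial degrees of fat point ideals\<close>

lemma init_deg_le: "f \<in> J \<Longrightarrow> f \<noteq> 0 \<Longrightarrow> homogeneous d f \<Longrightarrow> init_deg J \<le> d"
  unfolding init_deg_def by (rule Least_le) blast

lemma init_deg_attained:
  "f \<in> J \<Longrightarrow> f \<noteq> 0 \<Longrightarrow> homogeneous d f \<Longrightarrow> \<exists>g\<in>J. g \<noteq> 0 \<and> homogeneous (init_deg J) g"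
  unfolding init_deg_def by (rule LeastI_ex) blast

lemma in_fat_ideal_ord_at: "f \<noteq> 0 \<Longrightarrow> homogeneous d f \<Longrightarrow> f \<in> fat_ideal Z (\<lambda>P. ord_at P f - s)"
  by (auto simp: fat_ideal_def intro: ideal_pow_antimono[OF _ in_ideal_pow_ord_at])

text \<open>Multiplying by \<open>f\<close> raises every multiplicity by \<open>ord_P f\<close> and the degree by \<open>d\<close>.\<close>
lemma init_deg_fat_ideal_le_mult:
  fixes f :: "'k::idom poly3"
  assumes f: "f \<noteq> 0" "homogeneous d f"
    and nonempty: "g \<in> fat_ideal Z u" "g \<noteq> 0" "homogeneous e g"
    and mult: "\<forall>P\<in>Z. w P \<le> u P + ord_at P f"
  shows "init_deg (fat_ideal Z w) \<le> init_deg (fat_ideal Z u) + d"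
proof -
  obtain D where D: "D \<in> fat_ideal Z u" "D \<noteq> 0" "homogeneous (init_deg (fat_ideal Z u)) D"
    using init_deg_attained[OF nonempty] by blast
  have "D * f \<in> fat_ideal Z w"
    unfolding fat_ideal_def
  proof (intro CollectI ballI)
    fix P assume P: "P \<in> Z"
    have "D * f \<in> ideal_pow P (u P + ord_at P f)"
      using D(1) P by (intro ideal_pow_mult in_ideal_pow_ord_at[OF f]) (auto simp: fat_ideal_def)
    then show "D * f \<in> ideal_pow P (w P)"
      using mult P by (blast intro: ideal_pow_antimono)
  qed
  then show ?thesis
    by (rule init_deg_le) (use D f in \<open>auto intro: homogeneous_mult\<close>)
qed

lemma initial_degree_of_factor:
  fixes Z :: "(3 \<Rightarrow> 'k::field) set"
  assumes Z: "\<forall>P\<in>Z. P \<noteq> (\<lambda>_. 0)" and "n < m"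
    and F1: "F1 \<noteq> 0" "homogeneous d1 F1"
    and F2: "F2 \<noteq> 0" "homogeneous d2 F2"
    and prod: "F1 * F2 \<in> fat_ideal Z (\<lambda>_. m)"
    and deg: "d1 + d2 = init_deg (fat_ideal Z (\<lambda>_. m))"
  shows "d1 = init_deg (fat_ideal Z (\<lambda>P. ord_at P F1)) \<and>
           int (init_deg (fat_ideal Z (\<lambda>P. ord_at P F1)))
             - int (init_deg (fat_ideal Z (\<lambda>P. ord_at P F1 - (m - n))))
           \<le> int (init_deg (fat_ideal Z (\<lambda>_. m))) - int (init_deg (fat_ideal Z (\<lambda>_. n)))"
proof -
  have ord: "m \<le> ord_at P F1 + ord_at P F2" if "P \<in> Z" for P
    using le_ord_at[of "F1 * F2" "d1 + d2" P m] ord_at_mult[of P F1 d1 F2 d2] that Z F1 F2 prod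
    by (simp add: fat_ideal_def homogeneous_mult)
  have F1_in: "F1 \<in> fat_ideal Z (\<lambda>P. ord_at P F1 - s)" for s
    by (rule in_fat_ideal_ord_at[OF F1])
  have ord_shifted: "n \<le> ord_at P F1 - (m - n) + ord_at P F2" if "P \<in> Z" for P
    using ord[OF that] \<open>n < m\<close> by linarith
  have "init_deg (fat_ideal Z (\<lambda>P. ord_at P F1)) \<le> d1"
    using init_deg_le[OF F1_in[of 0]] F1 by simp
  moreover have "init_deg (fat_ideal Z (\<lambda>_. m)) \<le> init_deg (fat_ideal Z (\<lambda>P. ord_at P F1)) + d2"
    using init_deg_fat_ideal_le_mult[OF F2 F1_in[of 0] F1] ord by simp
  moreover have "init_deg (fat_ideal Z (\<lambda>_. n))
      \<le> init_deg (fat_ideal Z (\<lambda>P. ord_at P F1 - (m - n))) + d2"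
    using init_deg_fat_ideal_le_mult[OF F2 F1_in F1, of "\<lambda>_. n"] ord_shifted by blast
  ultimately show ?thesis
    using deg by linarith
qed

theorem lemma2p1:
  fixes Z :: "(3 \<Rightarrow> 'k::field_char_0) set"
    and m n :: nat
    and F1 F2 :: "'k poly3"
    and d1 d2 :: nat
  assumes "alg_closed_field TYPE('k)"
    and "finite Z"
    and "\<forall>P\<in>Z. P \<noteq> (\<lambda>_. 0)"
    and "\<forall>P\<in>Z. \<forall>Q\<in>Z. P \<noteq> Q \<longrightarrow> (\<forall>c. Q \<noteq> (\<lambda>i. c * P i))"
    and "0 < n" and "n < m"
    and "F1 \<noteq> 0" and "homogeneous d1 F1" and "0 < d1"
    and "F2 \<noteq> 0" and "homogeneous d2 F2" and "0 < d2"
    and "F1 * F2 \<in> fat_ideal Z (\<lambda>_. m)"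
    and "d1 + d2 = init_deg (fat_ideal Z (\<lambda>_. m))"
  shows "\<forall>(G, d) \<in> {(F1, d1), (F2, d2)}.
           d = init_deg (fat_ideal Z (\<lambda>P. ord_at P G)) \<and>
           int (init_deg (fat_ideal Z (\<lambda>P. ord_at P G)))
             - int (init_deg (fat_ideal Z (\<lambda>P. ord_at P G - (m - n))))
           \<le> int (init_deg (fat_ideal Z (\<lambda>_. m))) - int (init_deg (fat_ideal Z (\<lambda>_. n)))"
proof -
  have "F2 * F1 \<in> fat_ideal Z (\<lambda>_. m)" "d2 + d1 = init_deg (fat_ideal Z (\<lambda>_. m))"
    using assms(13,14) by (simp_all add: mult.commute)
  then show ?thesis
    using initial_degree_of_factor[OF assms(3,6,7,8,10,11,13,14)]
      initial_degree_of_factor[OF assms(3,6,10,11,7,8)]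
    by auto
qed

end
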